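(* Let $\{X_k(m): m\in\mathbb{R}_+,\ k\in\mathbb{N}\}$ be a family of integrable real random variables, independent in $k$, satisfying (C) $\mathbb{E}[X_k(m)]=0$ for all $m,k$; (W1) for every $\varepsilon>0$, $\lim_{m\to\infty}\sup_k\mathbb P(|X_k(m)|>\varepsilon)=0$; (W2) $\lim_{A\to\infty}\sup_{k,m}\mathbb E\big[|X_k(m)|\mathbf 1_{\{|X_k(m)|>A\}}\big]=0$. Let $(m_k)_{k\in\mathbb N}$ be positive reals with $\sum_k m_k=\infty$, $M_n=\sum_{k=1}^n m_k$, fix $K>0$, and for $1\le k\le n$ let $Y_k(m_k)=X_k(m_k)\mathbf 1_{\{|X_k(m_k)|<M_n/m_k\}}\mathbf 1_{\{m_k<K\}}$ (depending on $n$). Then $\lim_{n\to\infty}\max_{1\le k\le n}\frac{M_n}{m_k}\mathbb P\big(|X_k(m_k)|\mathbf 1_{\{m_k<K\}}\ge \tfrac{M_n}{m_k}\big)=0$ and $\lim_{n\to\infty}\max_{1\le k\le n}\frac{m_k}{M_n}\mathbb E[Y_k(m_k)^2]=0.$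
   Context: "Independent in $k$" means the families $\{X_k(m):m\in\mathbb R_+\}$ for different $k$ are independent. *)

theory Defs
  imports "HOL-Probability.Probability"
begin

end

theory Submission
  imports Defs
begin

text \<open>Only the uniform integrability (W2) of the family is needed. For \<open>m\<^sub>k < K\<close> the
  truncation level \<open>a = M\<^sub>n / m\<^sub>k\<close> exceeds \<open>M\<^sub>n / K \<rightarrow> \<infinity>\<close>, uniformly in \<open>k \<le> n\<close>. A Markov
  argument gives \<open>a P(|X| \<ge> a) \<le> E[|X|; |X| > A]\<close> for every \<open>A < a\<close>, and splitting at a
  level \<open>B\<close> gives \<open>E[(X 1{|X| < a})\<^sup>2] / a \<le> B\<^sup>2 / a + E[|X|; |X| > B]\<close>; both right-hand sides
  are small once \<open>A\<close>, \<open>B\<close> are chosen by uniform integrability and then \<open>n\<close> is large.\<close>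

definition tail_expectation :: "'a measure \<Rightarrow> ('a \<Rightarrow> real) \<Rightarrow> real \<Rightarrow> real" where
  "tail_expectation M f A = (\<integral>\<omega>. \<bar>f \<omega>\<bar> * indicator {\<omega>. \<bar>f \<omega>\<bar> > A} \<omega> \<partial>M)"

definition uniformly_integrable :: "'a measure \<Rightarrow> ('i \<Rightarrow> 'a \<Rightarrow> real) \<Rightarrow> 'i set \<Rightarrow> bool" where
  "uniformly_integrable M X I \<longleftrightarrow>
     (\<forall>e>0. \<forall>\<^sub>F A in at_top. \<forall>i\<in>I. tail_expectation M (X i) A < e)"

lemma integrable_tail:
  fixes f :: "'a \<Rightarrow> real"
  assumes "integrable M f"
  shows "integrable M (\<lambda>\<omega>. \<bar>f \<omega>\<bar> * indicator {\<omega>. \<bar>f \<omega>\<bar> > A} \<omega>)"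
proof (rule Bochner_Integration.integrable_bound[OF integrable_abs[OF assms]])
  show "(\<lambda>\<omega>. \<bar>f \<omega>\<bar> * indicator {\<omega>. \<bar>f \<omega>\<bar> > A} \<omega>) \<in> borel_measurable M"
    using borel_measurable_integrable[OF assms] by measurable
qed (auto simp: indicator_def)

lemma markov_tail_expectation:
  fixes f :: "'a \<Rightarrow> real"
  assumes f: "integrable M f" and "A < a"
  shows "a * measure M {\<omega>\<in>space M. a \<le> \<bar>f \<omega>\<bar>} \<le> tail_expectation M f A"
proof -
  have "a * measure M {\<omega>\<in>space M. a \<le> \<bar>f \<omega>\<bar>} = (\<integral>\<omega>. a * indicator {\<omega>. a \<le> \<bar>f \<omega>\<bar>} \<omega> \<partial>M)"
    by (simp add: Int_def conj_commute)
  also have "\<dots> \<le> tail_expectation M f A"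
    unfolding tail_expectation_def
    by (rule integral_mono'[OF integrable_tail[OF f]]) (use \<open>A < a\<close> in \<open>auto simp: indicator_def\<close>)
  finally show ?thesis .
qed

lemma (in prob_space) truncated_second_moment_le:
  fixes f :: "'a \<Rightarrow> real"
  assumes f: "integrable M f" and "0 \<le> a"
  shows "(\<integral>\<omega>. (f \<omega> * indicator {\<omega>. \<bar>f \<omega>\<bar> < a} \<omega>)\<^sup>2 \<partial>M) \<le> B\<^sup>2 + a * tail_expectation M f B"
proof -
  have pointwise: "(f \<omega> * indicator {\<omega>. \<bar>f \<omega>\<bar> < a} \<omega>)\<^sup>2
      \<le> B\<^sup>2 + a * (\<bar>f \<omega>\<bar> * indicator {\<omega>. \<bar>f \<omega>\<bar> > B} \<omega>)" for \<omega>
  proof (cases "\<bar>f \<omega>\<bar> < a")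
    case True
    then have "(f \<omega>)\<^sup>2 \<le> a * \<bar>f \<omega>\<bar>"
      by (metis abs_ge_zero abs_mult_self_eq less_imp_le mult_right_mono power2_eq_square)
    moreover have "(f \<omega>)\<^sup>2 \<le> B\<^sup>2" if "\<bar>f \<omega>\<bar> \<le> B"
      using that by (metis abs_ge_zero abs_le_square_iff abs_of_nonneg order_trans)
    ultimately show ?thesis
      using True by (cases "\<bar>f \<omega>\<bar> > B") (auto simp: indicator_def add_increasing)
  qed (use \<open>0 \<le> a\<close> in \<open>auto simp: indicator_def\<close>)
  have "(\<integral>\<omega>. (f \<omega> * indicator {\<omega>. \<bar>f \<omega>\<bar> < a} \<omega>)\<^sup>2 \<partial>M)
      \<le> (\<integral>\<omega>. B\<^sup>2 + a * (\<bar>f \<omega>\<bar> * indicator {\<omega>. \<bar>f \<omega>\<bar> > B} \<omega>) \<partial>M)"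
    using integrable_tail[OF f] \<open>0 \<le> a\<close> pointwise
    by (intro integral_mono') auto
  also have "\<dots> = B\<^sup>2 + a * tail_expectation M f B"
    using integrable_tail[OF f] by (simp add: tail_expectation_def prob_space)
  finally show ?thesis .
qed

lemma (in prob_space) truncated_second_moment_div_less:
  fixes f :: "'a \<Rightarrow> real"
  assumes f: "integrable M f" and tail: "tail_expectation M f B < r / 2"
    and "r > 0" and a: "2 * B\<^sup>2 / r < a"
  shows "(\<integral>\<omega>. (f \<omega> * indicator {\<omega>. \<bar>f \<omega>\<bar> < a} \<omega>)\<^sup>2 \<partial>M) / a < r"
proof -
  have "0 \<le> 2 * B\<^sup>2 / r" using \<open>r > 0\<close> by simp
  with a have "a > 0" by linarith
  from a have "B\<^sup>2 < a * (r / 2)" using \<open>r > 0\<close> by (simp add: field_simps)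
  moreover have "(\<integral>\<omega>. (f \<omega> * indicator {\<omega>. \<bar>f \<omega>\<bar> < a} \<omega>)\<^sup>2 \<partial>M) \<le> B\<^sup>2 + a * tail_expectation M f B"
    using \<open>a > 0\<close> by (intro truncated_second_moment_le f) simp
  moreover have "a * tail_expectation M f B < a * (r / 2)"
    using tail \<open>a > 0\<close> by (rule mult_strict_left_mono)
  ultimately have "(\<integral>\<omega>. (f \<omega> * indicator {\<omega>. \<bar>f \<omega>\<bar> < a} \<omega>)\<^sup>2 \<partial>M) < a * r" by linarith
  with \<open>a > 0\<close> show ?thesis by (simp add: pos_divide_less_eq mult.commute)
qed

lemma uniformly_integrable_if_SUP_tail_tendsto_zero:
  assumes "((\<lambda>A. SUP i\<in>I. ereal (tail_expectation M (X i) A)) \<longlongrightarrow> 0) at_top"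
  shows "uniformly_integrable M X I"
  unfolding uniformly_integrable_def
proof (intro allI impI)
  fix e :: real assume "e > 0"
  then have "\<forall>\<^sub>F A in at_top. (SUP i\<in>I. ereal (tail_expectation M (X i) A)) < ereal e"
    using order_tendstoD(2)[OF assms] by simp
  then show "\<forall>\<^sub>F A in at_top. \<forall>i\<in>I. tail_expectation M (X i) A < e"
    by eventually_elim (use SUP_lessD in fastforce)
qed

lemma uniformly_integrable_reindex:
  assumes "uniformly_integrable M X I" and "g ` J \<subseteq> I"
  shows "uniformly_integrable M (\<lambda>j. X (g j)) J"
  using assms unfolding uniformly_integrable_def by (fast elim!: eventually_mono)

lemma uniformly_integrableE:
  assumes "uniformly_integrable M X I" and "e > 0"
  obtains A where "\<And>i. i \<in> I \<Longrightarrow> tail_expectation M (X i) A < e"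
  using assms unfolding uniformly_integrable_def eventually_at_top_linorder by blast

lemma Max_image_tendsto_zero:
  fixes g :: "nat \<Rightarrow> nat \<Rightarrow> real"
  assumes "\<And>r. r > 0 \<Longrightarrow> \<forall>\<^sub>F n in sequentially. \<forall>k\<in>{1..n}. \<bar>g n k\<bar> < r"
  shows "(\<lambda>n. Max (g n ` {1..n})) \<longlonglongrightarrow> 0"
  unfolding tendsto_iff
proof (intro allI impI)
  fix r :: real assume "r > 0"
  with assms eventually_ge_at_top[of 1]
  have "\<forall>\<^sub>F n in sequentially. n \<ge> 1 \<and> (\<forall>k\<in>{1..n}. \<bar>g n k\<bar> < r)"
    by (simp add: eventually_conj_iff)
  then show "\<forall>\<^sub>F n in sequentially. dist (Max (g n ` {1..n})) 0 < r"
  proof eventually_elim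
    case (elim n)
    then have "Max (g n ` {1..n}) \<in> g n ` {1..n}" by (intro Max_in) auto
    then obtain k where "k \<in> {1..n}" "Max (g n ` {1..n}) = g n k" by blast
    with elim show ?case by simp
  qed
qed

lemma less_divide_of_mult_less:
  fixes m K T S :: real
  assumes "0 < m" "m < K" "0 \<le> T" "K * T < S"
  shows "T < S / m"
proof -
  have "m * T \<le> K * T" using assms by (intro mult_right_mono) auto
  with assms show ?thesis by (simp add: field_simps)
qed

lemma max_scaled_tail_probability_tendsto_zero:
  fixes X :: "nat \<Rightarrow> 'a \<Rightarrow> real" and m S :: "nat \<Rightarrow> real"
  assumes integ: "\<And>k. k \<ge> 1 \<Longrightarrow> integrable M (X k)"
    and UI: "uniformly_integrable M X {1..}"
    and mpos: "\<And>k. k \<ge> 1 \<Longrightarrow> m k > 0"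
    and S: "filterlim S at_top sequentially"
    and "K > 0"
  shows "(\<lambda>n. Max ((\<lambda>k. S n / m k *
            measure M {\<omega>\<in>space M. \<bar>X k \<omega>\<bar> * (if m k < K then 1 else 0) \<ge> S n / m k})
            ` {1..n})) \<longlonglongrightarrow> 0"
proof (rule Max_image_tendsto_zero)
  fix r :: real assume "r > 0"
  with UI obtain A where A: "\<And>k. k \<ge> 1 \<Longrightarrow> tail_expectation M (X k) A < r"
    by (rule uniformly_integrableE) auto
  from S have "\<forall>\<^sub>F n in sequentially. K * max A 0 < S n"
    by (simp add: filterlim_at_top_dense)
  then show "\<forall>\<^sub>F n in sequentially. \<forall>k\<in>{1..n}. \<bar>S n / m k *
      measure M {\<omega>\<in>space M. \<bar>X k \<omega>\<bar> * (if m k < K then 1 else 0) \<ge> S n / m k}\<bar> < r"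
  proof (eventually_elim, intro ballI)
    fix n k assume Sn: "K * max A 0 < S n" and "k \<in> {1..n}"
    then have "m k > 0" and "k \<ge> 1" using mpos by auto
    have "0 \<le> K * max A 0" using \<open>K > 0\<close> by simp
    with Sn have "S n > 0" by linarith
    show "\<bar>S n / m k *
        measure M {\<omega>\<in>space M. \<bar>X k \<omega>\<bar> * (if m k < K then 1 else 0) \<ge> S n / m k}\<bar> < r"
    proof (cases "m k < K")
      case True
      then have "max A 0 < S n / m k"
        using less_divide_of_mult_less[OF \<open>m k > 0\<close> _ _ Sn] by simp
      then have "S n / m k * measure M {\<omega>\<in>space M. S n / m k \<le> \<bar>X k \<omega>\<bar>} \<le> tail_expectation M (X k) A"
        by (intro markov_tail_expectation integ \<open>k \<ge> 1\<close>) simp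
      with A[OF \<open>k \<ge> 1\<close>] True \<open>S n > 0\<close> \<open>m k > 0\<close> show ?thesis by simp
    qed (use \<open>S n > 0\<close> \<open>m k > 0\<close> \<open>r > 0\<close> in \<open>simp add: divide_le_0_iff\<close>)
  qed
qed

lemma (in prob_space) max_scaled_truncated_second_moment_tendsto_zero:
  fixes X :: "nat \<Rightarrow> 'a \<Rightarrow> real" and m S :: "nat \<Rightarrow> real"
  assumes integ: "\<And>k. k \<ge> 1 \<Longrightarrow> integrable M (X k)"
    and UI: "uniformly_integrable M X {1..}"
    and mpos: "\<And>k. k \<ge> 1 \<Longrightarrow> m k > 0"
    and S: "filterlim S at_top sequentially"
    and "K > 0"
  shows "(\<lambda>n. Max ((\<lambda>k. m k / S n * (\<integral>\<omega>. (X k \<omega> * indicator {\<omega>. \<bar>X k \<omega>\<bar> < S n / m k} \<omega>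
            * (if m k < K then 1 else 0))\<^sup>2 \<partial>M)) ` {1..n})) \<longlonglongrightarrow> 0"
proof (rule Max_image_tendsto_zero)
  fix r :: real assume "r > 0"
  then have "r / 2 > 0" by simp
  with UI obtain B where B: "\<And>k. k \<ge> 1 \<Longrightarrow> tail_expectation M (X k) B < r / 2"
    by (rule uniformly_integrableE) auto
  from S have "\<forall>\<^sub>F n in sequentially. K * (2 * B\<^sup>2 / r) < S n"
    by (simp add: filterlim_at_top_dense)
  then show "\<forall>\<^sub>F n in sequentially. \<forall>k\<in>{1..n}. \<bar>m k / S n * (\<integral>\<omega>. (X k \<omega>
      * indicator {\<omega>. \<bar>X k \<omega>\<bar> < S n / m k} \<omega> * (if m k < K then 1 else 0))\<^sup>2 \<partial>M)\<bar> < r"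
  proof (eventually_elim, intro ballI)
    fix n k assume Sn: "K * (2 * B\<^sup>2 / r) < S n" and "k \<in> {1..n}"
    then have "m k > 0" and "k \<ge> 1" using mpos by auto
    have "0 \<le> 2 * B\<^sup>2 / r" using \<open>r > 0\<close> by simp
    with \<open>K > 0\<close> have "0 \<le> K * (2 * B\<^sup>2 / r)" by (intro mult_nonneg_nonneg) simp_all
    with Sn have "S n > 0" by linarith
    show "\<bar>m k / S n * (\<integral>\<omega>. (X k \<omega> * indicator {\<omega>. \<bar>X k \<omega>\<bar> < S n / m k} \<omega>
        * (if m k < K then 1 else 0))\<^sup>2 \<partial>M)\<bar> < r"
    proof (cases "m k < K")
      case True
      let ?E = "\<integral>\<omega>. (X k \<omega> * indicator {\<omega>. \<bar>X k \<omega>\<bar> < S n / m k} \<omega>)\<^sup>2 \<partial>M"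
      have "2 * B\<^sup>2 / r < S n / m k"
        using less_divide_of_mult_less[OF \<open>m k > 0\<close> True \<open>0 \<le> 2 * B\<^sup>2 / r\<close> Sn] .
      with B[OF \<open>k \<ge> 1\<close>] have "?E / (S n / m k) < r"
        by (intro truncated_second_moment_div_less integ \<open>k \<ge> 1\<close> \<open>r > 0\<close>)
      moreover have "0 \<le> ?E" by (intro integral_nonneg_AE) simp
      ultimately show ?thesis using True \<open>S n > 0\<close> \<open>m k > 0\<close> by (simp add: field_simps)
    qed (use \<open>r > 0\<close> in simp)
  qed
qed

theorem lemma5p1:
  fixes M :: "'a measure"
    and X :: "nat \<Rightarrow> real \<Rightarrow> 'a \<Rightarrow> real"
    and m :: "nat \<Rightarrow> real"
    and K :: real
    and Mn :: "nat \<Rightarrow> real"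
    and Y :: "nat \<Rightarrow> nat \<Rightarrow> 'a \<Rightarrow> real"
  assumes P: "prob_space M"
    and integ: "\<And>k t. k \<ge> 1 \<Longrightarrow> t \<ge> 0 \<Longrightarrow> integrable M (X k t)"
    and indep: "prob_space.indep_vars M (\<lambda>_. Pi\<^sub>M {0..} (\<lambda>_. borel))
                  (\<lambda>k \<omega>. \<lambda>t\<in>{0..}. X k t \<omega>) {1..}"
    and C: "\<And>k t. k \<ge> 1 \<Longrightarrow> t \<ge> 0 \<Longrightarrow> integral\<^sup>L M (X k t) = 0"
    and W1: "\<And>\<epsilon>. \<epsilon> > 0 \<Longrightarrow>
              ((\<lambda>t. SUP k\<in>{1..}. ereal (measure M {\<omega>\<in>space M. \<bar>X k t \<omega>\<bar> > \<epsilon>}))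
                 \<longlongrightarrow> 0) at_top"
    and W2: "((\<lambda>A. SUP (k, t)\<in>{1..} \<times> {0..}.
                 ereal (integral\<^sup>L M (\<lambda>\<omega>. \<bar>X k t \<omega>\<bar> * indicator {\<omega>. \<bar>X k t \<omega>\<bar> > A} \<omega>)))
                 \<longlongrightarrow> 0) at_top"
    and mpos: "\<And>k. k \<ge> 1 \<Longrightarrow> m k > 0"
    and mdiv: "filterlim (\<lambda>n. \<Sum>k=1..n. m k) at_top at_top"
    and Kpos: "K > 0"
    and Mn_def: "Mn = (\<lambda>n. \<Sum>k=1..n. m k)"
    and Y_def: "Y = (\<lambda>n k \<omega>. X k (m k) \<omega> * indicator {\<omega>. \<bar>X k (m k) \<omega>\<bar> < Mn n / m k} \<omega>
                        * (if m k < K then 1 else 0))"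
  shows "((\<lambda>n. Max ((\<lambda>k. Mn n / m k *
            measure M {\<omega>\<in>space M. \<bar>X k (m k) \<omega>\<bar> * (if m k < K then 1 else 0) \<ge> Mn n / m k})
            ` {1..n})) \<longlonglongrightarrow> 0) \<and>
         ((\<lambda>n. Max ((\<lambda>k. m k / Mn n * integral\<^sup>L M (\<lambda>\<omega>. (Y n k \<omega>)\<^sup>2)) ` {1..n}))
            \<longlonglongrightarrow> 0)"
proof -
  interpret prob_space M by (rule P)
  have UI_all: "uniformly_integrable M (\<lambda>(k, t). X k t) ({1..} \<times> {0..})"
    by (rule uniformly_integrable_if_SUP_tail_tendsto_zero)
      (use W2 in \<open>simp add: tail_expectation_def case_prod_unfold\<close>)
  have "(\<lambda>k. (k, m k)) ` {1..} \<subseteq> {1..} \<times> {0..}"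
    using mpos by (force intro: less_imp_le)
  from uniformly_integrable_reindex[OF UI_all this]
  have UI: "uniformly_integrable M (\<lambda>k. X k (m k)) {1..}"
    by simp
  have integ': "integrable M (X k (m k))" if "k \<ge> 1" for k
    using integ mpos that by (simp add: less_imp_le)
  have S: "filterlim Mn at_top sequentially"
    using mdiv by (simp add: Mn_def)
  show ?thesis
    unfolding Y_def
    using max_scaled_tail_probability_tendsto_zero
        [where X = "\<lambda>k. X k (m k)" and m = m, OF integ' UI mpos S Kpos]
      max_scaled_truncated_second_moment_tendsto_zero
        [where X = "\<lambda>k. X k (m k)" and m = m, OF integ' UI mpos S Kpos]
    by blast
qed

end
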